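(* Let $n,l_1,u_1,l_2,u_2$ be non-negative integers and $(f(k))$, $(g(k))$ complex sequences such that $\sum_{k=l_1}^{u_1}f(k)t^k(1-t)^{n-k}=\sum_{k=l_2}^{u_2}g(k)t^k$ for all complex $t$. Let $s\in\mathbb{C}\setminus\mathbb{Z}^{-}$, $s\neq0$. Then \[ \sum_{k=l_1}^{u_1}\frac{f(k)}{(k+s)\binom{n+s}{k+s}}=\sum_{k=l_2}^{u_2}\frac{g(k)}{k+s},\qquad \sum_{k=l_1}^{u_1}\frac{f(k)}{(k+1)\binom{n+1}{k+1}}=\sum_{k=l_2}^{u_2}\frac{g(k)}{k+1}, \] \[ \sum_{k=l_1}^{u_1}f(k)\frac{H_{n-k}-H_{n+s}}{(k+s)\binom{n+s}{k+s}}=-\sum_{k=l_2}^{u_2}g(k)\frac{H_{k+s}}{k+s},\qquad \sum_{k=l_1}^{u_1}f(k)\frac{H_{n-k}-H_{n+1}}{(k+1)\binom{n+1}{k+1}}=-\sum_{k=l_2}^{u_2}g(k)\frac{H_{k+1}}{k+1}. \]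
   Context: $\mathbb{Z}^{-}$ denotes the set of negative integers. For complex $z$ not a negative integer, $H_z=\psi(z+1)+\gamma$; for integers $m\ge0$, $H_m=\sum_{j=1}^m1/j$. Binomial coefficients with complex entries: $\binom{x}{y}=\frac{\Gamma(x+1)}{\Gamma(y+1)\Gamma(x-y+1)}$. *)

theory Defs
  imports "HOL-Analysis.Analysis"
begin

text \<open>Harmonic numbers of a complex argument: H z = psi(z+1) + gamma.\<close>
definition Hc :: "complex \<Rightarrow> complex" where
  "Hc z = Digamma (z + 1) + of_real euler_mascheroni"

definition cbinom :: "complex \<Rightarrow> complex \<Rightarrow> complex" where
  "cbinom x y = Gamma (x + 1) / (Gamma (y + 1) * Gamma (x - y + 1))"

end

theory Submission
  imports Defs
begin

text \<open>
  Once the terms with \<open>k > n\<close> are shown to vanish (the left-hand side has no pole at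
  \<open>t = 1\<close>), the hypothesis is an identity of polynomials, so any linear functional
  \<open>t^i \<mapsto> \<phi> i\<close> may be applied to it. It sends \<open>t^k (1 - t)^(n - k)\<close> to an alternating
  binomial sum of values of \<open>\<phi>\<close>. For \<open>\<phi> i = 1/(i + s)\<close> this sum is the Beta value
  \<open>B(k + s, n - k + 1) = 1/((k + s) binom(n + s, k + s))\<close>, and for \<open>\<phi> i = H(i + s)/(i + s)\<close>
  it is \<open>B(k + s, n - k + 1) (H(n + s) - H(n - k))\<close>; both follow by induction on \<open>n - k\<close>
  from \<open>B(x, y) = B(x + 1, y) + B(x, y + 1)\<close>. (These are the discrete forms of integrating
  the identity against \<open>t^(s - 1)\<close> and \<open>t^(s - 1) log(1 - t)\<close> over \<open>[0, 1]\<close>.)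
\<close>

lemma of_nat_plus_notin_nonpos_Ints:
  fixes x :: "'a::ring_1"
  assumes "x \<notin> \<int>\<^sub>\<le>\<^sub>0"
  shows "of_nat k + x \<notin> \<int>\<^sub>\<le>\<^sub>0"
proof
  assume "of_nat k + x \<in> \<int>\<^sub>\<le>\<^sub>0"
  then have "of_nat k + x - of_nat k \<in> \<int>\<^sub>\<le>\<^sub>0"
    by (intro nonpos_Ints_diff_Nats) auto
  with assms show False by simp
qed

lemma of_nat_plus_1_notin_nonpos_Ints: "(of_nat m + 1 :: 'a::{ring_1,ring_char_0}) \<notin> \<int>\<^sub>\<le>\<^sub>0"
  using of_nat_in_nonpos_Ints_iff[of "Suc m", where 'a = 'a] by (simp add: add.commute)

lemma isCont_eq_if_eq_off_point:
  fixes f g :: "'a::{perfect_space,t2_space} \<Rightarrow> 'b::t2_space"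
  assumes "isCont f a" "isCont g a" "\<And>x. x \<noteq> a \<Longrightarrow> f x = g x"
  shows "f a = g a"
proof -
  have "(g \<longlongrightarrow> g a) (at a)"
    using assms(2) by (simp add: isCont_def)
  moreover have "\<forall>\<^sub>F x in at a. g x = f x"
    by (auto simp: eventually_at_filter assms(3))
  ultimately have "(f \<longlongrightarrow> g a) (at a)"
    by (rule Lim_transform_eventually)
  moreover have "(f \<longlongrightarrow> f a) (at a)"
    using assms(1) by (simp add: isCont_def)
  ultimately show ?thesis
    using tendsto_unique[OF at_neq_bot] by blast
qed

text \<open>\<open>fdiff F m x\<close> is \<open>(-1)^m\<close> times the \<open>m\<close>-th forward difference of \<open>F\<close> at \<open>x\<close>.\<close>
definition fdiff :: "('a::semiring_1 \<Rightarrow> 'b::comm_ring_1) \<Rightarrow> nat \<Rightarrow> 'a \<Rightarrow> 'b" where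
  "fdiff F m x = (\<Sum>j\<le>m. of_nat (m choose j) * (-1) ^ j * F (x + of_nat j))"

lemma fdiff_0 [simp]: "fdiff F 0 x = F x"
  by (simp add: fdiff_def)

lemma fdiff_Suc: "fdiff F (Suc m) x = fdiff F m x - fdiff F m (x + 1)"
proof -
  define e where "e j = (-1) ^ j * F (x + of_nat j)" for j
  have "fdiff F (Suc m) x
      = e 0 + (\<Sum>j\<le>m. of_nat (m choose Suc j) * e (Suc j)) + (\<Sum>j\<le>m. of_nat (m choose j) * e (Suc j))"
    unfolding fdiff_def e_def sum.atMost_Suc_shift[of _ m] sum.atMost_Suc_shift[of _ "Suc m"]
    by (simp add: sum.distrib[symmetric] algebra_simps del: sum.atMost_Suc)
  also have "e 0 + (\<Sum>j\<le>m. of_nat (m choose Suc j) * e (Suc j)) = (\<Sum>j\<le>Suc m. of_nat (m choose j) * e j)"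
    by (simp add: sum.atMost_Suc_shift del: sum.atMost_Suc)
  also have "\<dots> = (\<Sum>j\<le>m. of_nat (m choose j) * e j)"
    by (simp add: binomial_eq_0)
  also have "\<dots> = fdiff F m x"
    by (simp add: fdiff_def e_def mult.assoc)
  also have "(\<Sum>j\<le>m. of_nat (m choose j) * e (Suc j)) = - fdiff F m (x + 1)"
    by (simp add: fdiff_def e_def sum_negf[symmetric] add_ac mult.assoc)
  finally show ?thesis by simp
qed

lemma fdiff_eqI:
  assumes "P x"
    and "\<And>x. P x \<Longrightarrow> P (x + 1)"
    and "\<And>x. P x \<Longrightarrow> G 0 x = F x"
    and "\<And>m x. P x \<Longrightarrow> G (Suc m) x = G m x - G m (x + 1)"
  shows "fdiff F m x = G m x"
  using assms(1)
proof (induction m arbitrary: x)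
  case 0
  then show ?case by (simp add: assms(3))
next
  case (Suc m)
  then show ?case by (simp add: fdiff_Suc assms(2,4))
qed

lemma fdiff_power: "fdiff (\<lambda>i. t ^ i) m (k::nat) = t ^ k * (1 - t) ^ m"
  by (rule fdiff_eqI[where P = "\<lambda>_. True"]) (simp_all add: algebra_simps)

lemma fdiff_shift: "fdiff (\<lambda>i. F (of_nat i + s)) m k = fdiff F m (of_nat k + s)"
  by (simp add: fdiff_def add_ac)

lemma fdiff_eq_sum_coeffs:
  fixes \<psi> :: "nat \<Rightarrow> 'b::comm_ring_1"
  assumes "k + m \<le> N"
  shows "fdiff \<psi> m k = (\<Sum>i\<le>N. fdiff (\<lambda>j. if j = i then 1 else 0) m k * \<psi> i)"
proof -
  have "(\<Sum>i\<le>N. fdiff (\<lambda>j. if j = i then 1 else 0) m k * \<psi> i)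
      = (\<Sum>j\<le>m. \<Sum>i\<le>N. of_nat (m choose j) * (-1) ^ j * (if k + j = i then \<psi> i else 0))"
    unfolding fdiff_def sum_distrib_right by (subst sum.swap) (auto intro!: sum.cong)
  also have "\<dots> = fdiff \<psi> m k"
    unfolding fdiff_def sum_distrib_left[symmetric] using assms by (intro sum.cong) auto
  finally show ?thesis ..
qed

lemma sum_fdiff_eq_if_eq_on_powers:
  fixes a b :: "nat \<Rightarrow> 'a::{idom,real_normed_div_algebra}" and m :: "nat \<Rightarrow> nat"
  assumes "finite A" "finite B"
    and "\<And>t. (\<Sum>k\<in>A. a k * fdiff (\<lambda>i. t ^ i) (m k) k) = (\<Sum>k\<in>B. b k * t ^ k)"
  shows "(\<Sum>k\<in>A. a k * fdiff \<phi> (m k) k) = (\<Sum>k\<in>B. b k * \<phi> k)"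
proof -
  define N where "N = (\<Sum>k\<in>A. k + m k) + \<Sum>B"
  define c where "c i = (\<Sum>k\<in>A. a k * fdiff (\<lambda>j. if j = i then 1 else 0) (m k) k)" for i
  define d where "d i = (if i \<in> B then b i else 0)" for i
  have lhs: "(\<Sum>k\<in>A. a k * fdiff \<psi> (m k) k) = (\<Sum>i\<le>N. c i * \<psi> i)" for \<psi>
  proof -
    have "k + m k \<le> N" if "k \<in> A" for k
      using member_le_sum[OF that, of "\<lambda>k. k + m k"] assms(1) by (simp add: N_def)
    then have "(\<Sum>k\<in>A. a k * fdiff \<psi> (m k) k)
        = (\<Sum>k\<in>A. a k * (\<Sum>i\<le>N. fdiff (\<lambda>j. if j = i then 1 else 0) (m k) k * \<psi> i))"
      by (intro sum.cong refl arg_cong[where f = "(*) _"] fdiff_eq_sum_coeffs)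
    also have "\<dots> = (\<Sum>i\<le>N. c i * \<psi> i)"
      by (simp add: c_def sum_distrib_left sum_distrib_right sum.swap[of _ A] mult.assoc)
    finally show ?thesis .
  qed
  have rhs: "(\<Sum>k\<in>B. b k * \<psi> k) = (\<Sum>i\<le>N. d i * \<psi> i)" for \<psi>
  proof -
    have "B \<subseteq> {..N}"
      using member_le_sum[of _ B id] assms(2) by (force simp: N_def)
    then show ?thesis
      by (intro sum.mono_neutral_cong_left) (auto simp: d_def)
  qed
  have "\<forall>t. (\<Sum>i\<le>N. c i * t ^ i) = (\<Sum>i\<le>N. d i * t ^ i)"
    using assms(3) by (simp add: lhs[symmetric] rhs[symmetric])
  then have "\<forall>i\<le>N. c i = d i"
    by (simp only: polyfun_eq_coeffs)
  then show ?thesis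
    by (simp add: lhs rhs)
qed

lemma coeff_vanishes_if_isCont_at_1:
  fixes f :: "nat \<Rightarrow> 'a::real_normed_field"
  assumes "finite A" "isCont p 1"
    and p: "\<And>t. t \<noteq> 1 \<Longrightarrow> (\<Sum>k\<in>A. f k * t ^ k * (1 - t) powi (int n - int k)) = p t"
    and "k \<in> A" "n < k"
  shows "f k = 0"
proof (rule ccontr)
  assume "f k \<noteq> 0"
  define S where "S = {k\<in>A. f k \<noteq> 0}"
  define K where "K = Max S"
  have "finite S" "k \<in> S"
    using assms \<open>f k \<noteq> 0\<close> by (auto simp: S_def)
  then have "K \<in> S" and K_max: "\<And>j. j \<in> S \<Longrightarrow> j \<le> K"
    unfolding K_def by (auto intro!: Max_in)
  have "n < K"
    using K_max[OF \<open>k \<in> S\<close>] \<open>n < k\<close> by simp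
  \<comment> \<open>\<open>(1 - t)^(K - n)\<close> times the left-hand side: a polynomial whose value at \<open>1\<close> is \<open>f K\<close>\<close>
  define q where "q t = (\<Sum>j\<in>S. f j * t ^ j * (1 - t) ^ (K - j))" for t :: 'a
  have q_eq: "q t = (1 - t) ^ (K - n) * p t" if "t \<noteq> 1" for t
  proof -
    have "(1 - t) powi (int n - int j) * (1 - t) ^ (K - n) = (1 - t) ^ (K - j)" if "j \<in> S" for j
    proof -
      have "(1 - t) powi (int n - int j) * (1 - t) ^ (K - n) = (1 - t) powi (int n - int j + int (K - n))"
        using \<open>t \<noteq> 1\<close> by (simp add: power_int_add power_int_of_nat)
      also have "int n - int j + int (K - n) = int (K - j)"
        using K_max[OF that] \<open>n < K\<close> by simp
      finally show ?thesis by (simp add: power_int_of_nat)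
    qed
    then have "q t = (\<Sum>j\<in>A. f j * t ^ j * (1 - t) powi (int n - int j)) * (1 - t) ^ (K - n)"
      unfolding q_def sum_distrib_right using \<open>finite A\<close>
      by (intro sum.mono_neutral_cong_left) (auto simp: S_def mult.assoc)
    then show ?thesis
      using p[OF that] by simp
  qed
  have "isCont q 1"
    unfolding q_def by (intro continuous_intros)
  moreover have "isCont (\<lambda>t. (1 - t) ^ (K - n) * p t) 1"
    using assms(2) by (intro continuous_intros)
  ultimately have "q 1 = 0"
    using isCont_eq_if_eq_off_point[where f = q and g = "\<lambda>t. (1 - t) ^ (K - n) * p t"] q_eq \<open>n < K\<close>
    by simp
  moreover have "q 1 = (\<Sum>j\<in>S. if j = K then f j else 0)"
    unfolding q_def using K_max by (intro sum.cong) (auto simp: power_0_left dest: le_antisym)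
  ultimately show False
    using \<open>finite S\<close> \<open>K \<in> S\<close> by (simp add: S_def)
qed

lemma Beta_1_right:
  fixes x :: "'a::Gamma"
  assumes "x \<notin> \<int>\<^sub>\<le>\<^sub>0"
  shows "Beta x 1 = 1 / x"
  using assms Gamma_plus1[OF assms] by (auto simp: Beta_def Gamma_eq_zero_iff)

lemma inverse_cbinom_eq_Beta:
  assumes "x \<notin> \<int>\<^sub>\<le>\<^sub>0"
  shows "inverse (x * cbinom (x + of_nat m) x) = Beta x (of_nat m + 1)"
proof -
  have "x + of_nat m + 1 \<notin> \<int>\<^sub>\<le>\<^sub>0"
    using of_nat_plus_notin_nonpos_Ints[OF assms, of "Suc m"] by (simp add: add_ac)
  then have "Gamma (x + of_nat m + 1) \<noteq> 0" "Gamma x \<noteq> 0"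
    using assms by (simp_all add: Gamma_eq_zero_iff)
  moreover have "Gamma (of_nat m + 1 :: complex) \<noteq> 0"
    by (simp add: Gamma_eq_zero_iff of_nat_plus_1_notin_nonpos_Ints)
  moreover have "cbinom (x + of_nat m) x = Gamma (x + of_nat m + 1) / (x * Gamma x * Gamma (of_nat m + 1))"
    by (simp add: cbinom_def Gamma_plus1[OF assms])
  moreover have "x \<noteq> 0"
    using assms by auto
  ultimately show ?thesis
    by (simp add: Beta_def add_ac)
qed

lemma fdiff_inverse_eq_Beta:
  fixes x :: "'a::Gamma"
  assumes "x \<notin> \<int>\<^sub>\<le>\<^sub>0"
  shows "fdiff (\<lambda>y. 1 / y) m x = Beta x (of_nat m + 1)"
proof (rule fdiff_eqI[where P = "\<lambda>x. x \<notin> \<int>\<^sub>\<le>\<^sub>0" and G = "\<lambda>m x. Beta x (of_nat m + 1)"])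
  fix m and x :: 'a
  assume "x \<notin> \<int>\<^sub>\<le>\<^sub>0"
  then show "Beta x (of_nat (Suc m) + 1) = Beta x (of_nat m + 1) - Beta (x + 1) (of_nat m + 1)"
    using Beta_plus1_plus1[of x "of_nat m + 1"] of_nat_plus_1_notin_nonpos_Ints[of m]
    by (simp add: eq_diff_eq add_ac)
next
  show "x + 1 \<notin> \<int>\<^sub>\<le>\<^sub>0" if "x \<notin> \<int>\<^sub>\<le>\<^sub>0" for x :: 'a
    using that plus_one_in_nonpos_Ints_imp by blast
qed (simp_all add: assms Beta_1_right)

lemma Beta_plus1_swap:
  fixes x y :: "'a::Gamma"
  assumes "x \<notin> \<int>\<^sub>\<le>\<^sub>0" "y \<notin> \<int>\<^sub>\<le>\<^sub>0" "x + y \<noteq> 0"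
  shows "y * Beta (x + 1) y = x * Beta x (y + 1)"
proof -
  have "(x + y) * (y * Beta (x + 1) y) = (x + y) * (x * Beta x (y + 1))"
    using Beta_plus1_left[OF assms(1), of y] Beta_plus1_right[OF assms(2), of x]
    by (metis mult.left_commute)
  with assms(3) show ?thesis by simp
qed

lemma Hc_plus1: "x + 1 \<noteq> 0 \<Longrightarrow> Hc (x + 1) = Hc x + 1 / (x + 1)"
  unfolding Hc_def using Digamma_plus1[of "x + 1"] by (simp add: add_ac)

lemma Beta_Hc_diff_recurrence:
  assumes x: "x \<notin> \<int>\<^sub>\<le>\<^sub>0"
  shows "Beta x (of_nat (Suc m) + 1) * (Hc (x + of_nat (Suc m)) - of_real (harm (Suc m)))
       = Beta x (of_nat m + 1) * (Hc (x + of_nat m) - of_real (harm m))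
         - Beta (x + 1) (of_nat m + 1) * (Hc (x + 1 + of_nat m) - of_real (harm m))"
proof -
  define r where "r = x + of_nat m + 1"
  define B where "B = Beta x (of_nat m + 1)"
  define B' where "B' = Beta (x + 1) (of_nat m + 1)"
  define B2 where "B2 = Beta x (of_nat (Suc m) + 1)"
  define H where "H = Hc (x + of_nat m)"
  define h where "h = complex_of_real (harm m)"
  have "r \<noteq> 0"
    using of_nat_plus_notin_nonpos_Ints[OF x, of "Suc m"] by (auto simp: r_def add_ac)
  have m1: "(of_nat m + 1 :: complex) \<notin> \<int>\<^sub>\<le>\<^sub>0" "(of_nat m + 1 :: complex) \<noteq> 0"
    using of_nat_plus_1_notin_nonpos_Ints[of m, where 'a = complex] by auto
  have "B2 = B - B'"
    using Beta_plus1_plus1[OF x m1(1)] by (simp add: B_def B'_def B2_def eq_diff_eq add_ac)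
  have "B2 * (1 / r - 1 / (of_nat m + 1)) = - (x * B2) / (r * (of_nat m + 1))"
    using \<open>r \<noteq> 0\<close> m1(2) by (simp add: r_def field_simps)
  also have "x * B2 = (of_nat m + 1) * B'"
    using Beta_plus1_swap[OF x m1(1)] \<open>r \<noteq> 0\<close> by (simp add: r_def B'_def B2_def add_ac)
  finally have key: "B2 * (1 / r - 1 / (of_nat m + 1)) = - B' / r"
    using m1(2) by simp
  have Hc_r: "Hc r = H + 1 / r"
    using Hc_plus1[of "x + of_nat m"] \<open>r \<noteq> 0\<close> by (simp add: H_def r_def)
  have "of_real (harm (Suc m)) = h + 1 / (of_nat m + 1)"
    by (simp add: h_def harm_Suc add.commute inverse_eq_divide)
  then have "B2 * (Hc r - of_real (harm (Suc m))) = B2 * (H - h) + B2 * (1 / r - 1 / (of_nat m + 1))"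
    by (simp add: Hc_r algebra_simps)
  also have "\<dots> = (B - B') * (H - h) - B' / r"
    unfolding key by (simp add: \<open>B2 = B - B'\<close>)
  also have "\<dots> = B * (H - h) - B' * (Hc r - h)"
    by (simp add: Hc_r algebra_simps)
  finally show ?thesis
    by (simp add: r_def B_def B'_def B2_def H_def h_def add_ac)
qed

lemma fdiff_Hc_div_eq_Beta:
  assumes "x \<notin> \<int>\<^sub>\<le>\<^sub>0"
  shows "fdiff (\<lambda>y. Hc y / y) m x = Beta x (of_nat m + 1) * (Hc (x + of_nat m) - of_real (harm m))"
proof (rule fdiff_eqI[where P = "\<lambda>x. x \<notin> \<int>\<^sub>\<le>\<^sub>0"
      and G = "\<lambda>m x. Beta x (of_nat m + 1) * (Hc (x + of_nat m) - of_real (harm m))"])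
  show "x + 1 \<notin> \<int>\<^sub>\<le>\<^sub>0" if "x \<notin> \<int>\<^sub>\<le>\<^sub>0" for x :: complex
    using that plus_one_in_nonpos_Ints_imp by blast
qed (rule Beta_Hc_diff_recurrence | simp add: assms Beta_1_right harm_expand(1))+

lemma inverse_cbinom_shift_eq_Beta:
  assumes "k \<le> n" "s \<notin> \<int>\<^sub>\<le>\<^sub>0"
  shows "inverse ((of_nat k + s) * cbinom (of_nat n + s) (of_nat k + s)) = Beta (of_nat k + s) (of_nat (n - k) + 1)"
proof -
  have "of_nat n + s = (of_nat k + s) + of_nat (n - k)"
    using assms(1) by (simp add: of_nat_diff)
  then show ?thesis
    using inverse_cbinom_eq_Beta[OF of_nat_plus_notin_nonpos_Ints[OF assms(2)]] by (simp only:)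
qed

context
  fixes n l1 u1 l2 u2 :: nat and f g :: "nat \<Rightarrow> complex"
  assumes poly_id: "\<forall>t::complex.
      (\<Sum>k=l1..u1. f k * t ^ k * (1 - t) powi (int n - int k)) = (\<Sum>k=l2..u2. g k * t ^ k)"
begin

lemma powi_identity_coeff_vanishes:
  assumes "k \<in> {l1..u1}" "n < k"
  shows "f k = 0"
proof (rule coeff_vanishes_if_isCont_at_1[where A = "{l1..u1}" and p = "\<lambda>t. \<Sum>k=l2..u2. g k * t ^ k"])
  show "isCont (\<lambda>t. \<Sum>k=l2..u2. g k * t ^ k) 1"
    by (intro continuous_intros)
qed (use assms poly_id in simp_all)

lemma powi_identity_transfer: "(\<Sum>k=l1..u1. f k * fdiff \<phi> (n - k) k) = (\<Sum>k=l2..u2. g k * \<phi> k)"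
proof (rule sum_fdiff_eq_if_eq_on_powers)
  fix t :: complex
  have "f k * fdiff (\<lambda>i. t ^ i) (n - k) k = f k * t ^ k * (1 - t) powi (int n - int k)"
    if "k \<in> {l1..u1}" for k
  proof (cases "k \<le> n")
    case True
    then have "int n - int k = int (n - k)"
      by simp
    then have "(1 - t) powi (int n - int k) = (1 - t) ^ (n - k)"
      by (simp only: power_int_of_nat)
    then show ?thesis
      by (simp only: fdiff_power mult.assoc)
  qed (use powi_identity_coeff_vanishes that in simp)
  then have "(\<Sum>k=l1..u1. f k * fdiff (\<lambda>i. t ^ i) (n - k) k)
      = (\<Sum>k=l1..u1. f k * t ^ k * (1 - t) powi (int n - int k))"
    by (rule sum.cong[OF refl])
  with poly_id show "(\<Sum>k=l1..u1. f k * fdiff (\<lambda>i. t ^ i) (n - k) k) = (\<Sum>k=l2..u2. g k * t ^ k)"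
    by simp
qed simp_all

lemma powi_identity_Beta_sum:
  assumes "s \<notin> \<int>\<^sub>\<le>\<^sub>0"
  shows "(\<Sum>k=l1..u1. f k / ((of_nat k + s) * cbinom (of_nat n + s) (of_nat k + s)))
       = (\<Sum>k=l2..u2. g k / (of_nat k + s))"
proof -
  have "f k / ((of_nat k + s) * cbinom (of_nat n + s) (of_nat k + s))
      = f k * fdiff (\<lambda>i. 1 / (of_nat i + s)) (n - k) k" if "k \<in> {l1..u1}" for k
  proof (cases "k \<le> n")
    case True
    have "of_nat k + s \<notin> \<int>\<^sub>\<le>\<^sub>0"
      by (rule of_nat_plus_notin_nonpos_Ints[OF assms])
    then have "fdiff (\<lambda>i. 1 / (of_nat i + s)) (n - k) k = Beta (of_nat k + s) (of_nat (n - k) + 1)"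
      unfolding fdiff_shift[of "\<lambda>y. 1 / y"] by (rule fdiff_inverse_eq_Beta)
    then show ?thesis
      unfolding divide_inverse inverse_cbinom_shift_eq_Beta[OF True assms] by simp
  qed (use powi_identity_coeff_vanishes that in simp)
  then have "(\<Sum>k=l1..u1. f k / ((of_nat k + s) * cbinom (of_nat n + s) (of_nat k + s)))
      = (\<Sum>k=l1..u1. f k * fdiff (\<lambda>i. 1 / (of_nat i + s)) (n - k) k)"
    by (rule sum.cong[OF refl])
  also have "\<dots> = (\<Sum>k=l2..u2. g k / (of_nat k + s))"
    by (simp add: powi_identity_transfer)
  finally show ?thesis .
qed

lemma powi_identity_harmonic_sum:
  assumes "s \<notin> \<int>\<^sub>\<le>\<^sub>0"
  shows "(\<Sum>k=l1..u1. f k * (of_real (harm (n - k)) - Hc (of_nat n + s))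
                          / ((of_nat k + s) * cbinom (of_nat n + s) (of_nat k + s)))
       = - (\<Sum>k=l2..u2. g k * Hc (of_nat k + s) / (of_nat k + s))"
proof -
  have "f k * (of_real (harm (n - k)) - Hc (of_nat n + s)) / ((of_nat k + s) * cbinom (of_nat n + s) (of_nat k + s))
      = - (f k * fdiff (\<lambda>i. Hc (of_nat i + s) / (of_nat i + s)) (n - k) k)" if "k \<in> {l1..u1}" for k
  proof (cases "k \<le> n")
    case True
    have "of_nat k + s \<notin> \<int>\<^sub>\<le>\<^sub>0"
      by (rule of_nat_plus_notin_nonpos_Ints[OF assms])
    then have "fdiff (\<lambda>i. Hc (of_nat i + s) / (of_nat i + s)) (n - k) k
        = Beta (of_nat k + s) (of_nat (n - k) + 1) * (Hc (of_nat k + s + of_nat (n - k)) - of_real (harm (n - k)))"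
      unfolding fdiff_shift[of "\<lambda>y. Hc y / y"] by (rule fdiff_Hc_div_eq_Beta)
    also have "of_nat k + s + of_nat (n - k) = of_nat n + s"
      using True by (simp add: of_nat_diff)
    finally have fdiff_eq: "fdiff (\<lambda>i. Hc (of_nat i + s) / (of_nat i + s)) (n - k) k
        = Beta (of_nat k + s) (of_nat (n - k) + 1) * (Hc (of_nat n + s) - of_real (harm (n - k)))" .
    show ?thesis
      unfolding fdiff_eq
      unfolding divide_inverse inverse_cbinom_shift_eq_Beta[OF True assms] by (simp add: algebra_simps)
  qed (use powi_identity_coeff_vanishes that in simp)
  then have "(\<Sum>k=l1..u1. f k * (of_real (harm (n - k)) - Hc (of_nat n + s))
                          / ((of_nat k + s) * cbinom (of_nat n + s) (of_nat k + s)))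
      = - (\<Sum>k=l1..u1. f k * fdiff (\<lambda>i. Hc (of_nat i + s) / (of_nat i + s)) (n - k) k)"
    by (simp add: sum_negf)
  also have "\<dots> = - (\<Sum>k=l2..u2. g k * Hc (of_nat k + s) / (of_nat k + s))"
    by (simp add: powi_identity_transfer)
  finally show ?thesis .
qed

end

theorem corollary8:
  fixes n l1 u1 l2 u2 :: nat and f g :: "nat \<Rightarrow> complex" and s :: complex
  assumes poly_id: "\<forall>t::complex.
      (\<Sum>k=l1..u1. f k * t ^ k * (1 - t) powi (int n - int k)) = (\<Sum>k=l2..u2. g k * t ^ k)"
    and s_notnegint: "s \<notin> \<int>\<^sub>\<le>\<^sub>0 - {0}"
    and s_nz: "s \<noteq> 0"
  shows "(\<Sum>k=l1..u1. f k / ((of_nat k + s) * cbinom (of_nat n + s) (of_nat k + s)))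
           = (\<Sum>k=l2..u2. g k / (of_nat k + s))
       \<and> (\<Sum>k=l1..u1. f k / ((of_nat k + 1) * cbinom (of_nat n + 1) (of_nat k + 1)))
           = (\<Sum>k=l2..u2. g k / (of_nat k + 1))
       \<and> (\<Sum>k=l1..u1. f k * (of_real (harm (n - k)) - Hc (of_nat n + s))
                          / ((of_nat k + s) * cbinom (of_nat n + s) (of_nat k + s)))
           = - (\<Sum>k=l2..u2. g k * Hc (of_nat k + s) / (of_nat k + s))
       \<and> (\<Sum>k=l1..u1. f k * (of_real (harm (n - k)) - Hc (of_nat n + 1))
                          / ((of_nat k + 1) * cbinom (of_nat n + 1) (of_nat k + 1)))
           = - (\<Sum>k=l2..u2. g k * Hc (of_nat k + 1) / (of_nat k + 1))"
proof -
  have s: "s \<notin> \<int>\<^sub>\<le>\<^sub>0"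
    using s_notnegint s_nz by auto
  have one: "(1::complex) \<notin> \<int>\<^sub>\<le>\<^sub>0"
    by simp
  show ?thesis
    by (intro conjI powi_identity_Beta_sum[OF poly_id s] powi_identity_Beta_sum[OF poly_id one]
        powi_identity_harmonic_sum[OF poly_id s] powi_identity_harmonic_sum[OF poly_id one])
qed

end
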